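(* Let $G$ be a connected $k$-regular graph on $n\ge 2$ vertices. Then $h_G<\sqrt{n-1}\,\gamma(G)$, where $h_G$ is the Cheeger constant of $G$.
   Context: For a finite simple undirected graph $G$ with $n$ vertices, let $\mathcal{F}=\{x\in\mathbb{R}^{V(G)} : \sum_{v} x_v = 0,\ \|x\|_\infty = 1\}$, for $x\in\mathcal{F}$ let $\gamma_x(G)=\max_{uv\in E(G)}|x_u-x_v|$, and $\gamma(G)=\min_{x\in\mathcal{F}}\gamma_x(G)$. For $S\subseteq V(G)$, $\operatorname{vol}(S)=\sum_{u\in S}\deg(u)$; for nonempty proper $S\subsetneq V(G)$, $\partial S$ is the set of edges with exactly one endpoint in $S$, $h_G(S)=|\partial S|/\min(\operatorname{vol}(S),\operatorname{vol}(V(G)\setminus S))$, and $h_G=\min_S h_G(S)$ over nonempty proper subsets $S$. *)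

theory Defs
  imports "HOL-Analysis.Analysis"
begin

definition simple_graph :: "'a set \<Rightarrow> ('a \<Rightarrow> 'a \<Rightarrow> bool) \<Rightarrow> bool" where
  "simple_graph V E \<longleftrightarrow> finite V \<and> (\<forall>u v. E u v \<longrightarrow> u \<in> V \<and> v \<in> V)
     \<and> (\<forall>u v. E u v \<longrightarrow> E v u) \<and> (\<forall>u. \<not> E u u)"

definition connected_graph :: "'a set \<Rightarrow> ('a \<Rightarrow> 'a \<Rightarrow> bool) \<Rightarrow> bool" where
  "connected_graph V E \<longleftrightarrow> (\<forall>u\<in>V. \<forall>v\<in>V. E\<^sup>*\<^sup>* u v)"

definition degree :: "'a set \<Rightarrow> ('a \<Rightarrow> 'a \<Rightarrow> bool) \<Rightarrow> 'a \<Rightarrow> nat" where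
  "degree V E u = card {v \<in> V. E u v}"

definition regular :: "'a set \<Rightarrow> ('a \<Rightarrow> 'a \<Rightarrow> bool) \<Rightarrow> nat \<Rightarrow> bool" where
  "regular V E k \<longleftrightarrow> (\<forall>v\<in>V. degree V E v = k)"

definition feasible :: "'a set \<Rightarrow> ('a \<Rightarrow> real) set" where
  "feasible V = {x. (\<forall>v. v \<notin> V \<longrightarrow> x v = 0) \<and> (\<Sum>v\<in>V. x v) = 0
                   \<and> Max ((\<lambda>v. \<bar>x v\<bar>) ` V) = 1}"

definition gamma_x :: "'a set \<Rightarrow> ('a \<Rightarrow> 'a \<Rightarrow> bool) \<Rightarrow> ('a \<Rightarrow> real) \<Rightarrow> real" where
  "gamma_x V E x = Max {\<bar>x u - x v\<bar> | u v. u \<in> V \<and> v \<in> V \<and> E u v}"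

definition gamma :: "'a set \<Rightarrow> ('a \<Rightarrow> 'a \<Rightarrow> bool) \<Rightarrow> real" where
  "gamma V E = Inf (gamma_x V E ` feasible V)"

definition vol :: "'a set \<Rightarrow> ('a \<Rightarrow> 'a \<Rightarrow> bool) \<Rightarrow> 'a set \<Rightarrow> nat" where
  "vol V E S = (\<Sum>u\<in>S. degree V E u)"

text \<open>Edges with exactly one endpoint in S (each edge counted once, oriented from S).\<close>
definition boundary_size :: "'a set \<Rightarrow> ('a \<Rightarrow> 'a \<Rightarrow> bool) \<Rightarrow> 'a set \<Rightarrow> nat" where
  "boundary_size V E S = card {(u, v). u \<in> S \<and> v \<in> V - S \<and> E u v}"

definition cheeger_ratio :: "'a set \<Rightarrow> ('a \<Rightarrow> 'a \<Rightarrow> bool) \<Rightarrow> 'a set \<Rightarrow> real" where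
  "cheeger_ratio V E S = real (boundary_size V E S) / real (min (vol V E S) (vol V E (V - S)))"

definition cheeger :: "'a set \<Rightarrow> ('a \<Rightarrow> 'a \<Rightarrow> bool) \<Rightarrow> real" where
  "cheeger V E = Min (cheeger_ratio V E ` {S. S \<subseteq> V \<and> S \<noteq> {} \<and> S \<noteq> V})"

end

theory Submission
  imports Defs
begin

text \<open>Let h be the Cheeger constant, n = card V, and x feasible with edge differences at most
  g = gamma_x V E x. Take a median m of x. The parts of x above and below m are supported on
  at most n/2 vertices each, so by the coarea inequality and |y u^2 - y v^2| \<le> g (y u + y v) each
  part y satisfies h * sum y^2 \<le> g * sum y. With Cauchy-Schwarz this gives
  h^2 * sum (x - m)^2 \<le> n g^2, and sum (x - m)^2 \<ge> sum x^2 \<ge> n/(n - 1) because x sums to 0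
  and has a coordinate of absolute value 1; hence h \<le> sqrt (n - 1) g. Strictness has to
  survive the infimum over x: if g is small, the neighbours of a coordinate of absolute value 1
  push sum x^2 up by 1/4; if g is large, h \<le> 1 suffices.\<close>

lemma sum_power2_diff_const:
  fixes x :: "'a \<Rightarrow> real"
  shows "(\<Sum>v\<in>W. (x v - \<mu>)\<^sup>2) = (\<Sum>v\<in>W. (x v)\<^sup>2) - 2 * \<mu> * (\<Sum>v\<in>W. x v) + real (card W) * \<mu>\<^sup>2"
  by (simp add: power2_diff sum.distrib sum_subtractf sum_distrib_left sum_distrib_right mult_ac)

lemma sum_power2_eq_mean_deviation:
  fixes x :: "'a \<Rightarrow> real"
  shows "(\<Sum>v\<in>W. (x v)\<^sup>2) = (\<Sum>v\<in>W. x v)\<^sup>2 / card W + (\<Sum>v\<in>W. (x v - (\<Sum>w\<in>W. x w) / card W)\<^sup>2)"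
proof (cases "card W = 0")
  case False
  then show ?thesis
    unfolding sum_power2_diff_const by (simp add: power2_eq_square field_simps)
qed (auto simp: card_eq_0_iff)

lemma abs_diff_power2_le:
  fixes a b g :: real
  assumes "0 \<le> a" "0 \<le> b" "\<bar>a - b\<bar> \<le> g"
  shows "\<bar>a\<^sup>2 - b\<^sup>2\<bar> \<le> g * (a + b)"
proof -
  have "a\<^sup>2 - b\<^sup>2 = (a - b) * (a + b)"
    by (simp add: power2_eq_square algebra_simps)
  then have "\<bar>a\<^sup>2 - b\<^sup>2\<bar> = \<bar>a - b\<bar> * (a + b)"
    using assms by (simp add: abs_mult)
  also have "\<dots> \<le> g * (a + b)"
    using assms by (intro mult_right_mono) auto
  finally show ?thesis .
qed

lemma exists_median:
  fixes x :: "'a \<Rightarrow> real"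
  assumes "finite V"
  shows "\<exists>m. 2 * card {v\<in>V. m < x v} \<le> card V \<and> 2 * card {v\<in>V. x v < m} \<le> card V"
proof (cases "V = {}")
  case False
  define B where "B = {t \<in> x ` V. 2 * card {v\<in>V. x v < t} \<le> card V}"
  have no_smaller: "{v\<in>V. x v < Min (x ` V)} = {}"
    using assms by (metis (no_types, lifting) Collect_empty_eq Min_le finite_imageI image_eqI not_less)
  have "Min (x ` V) \<in> B"
    using assms False by (simp add: B_def no_smaller del: Min_gr_iff)
  moreover have "finite B"
    using assms by (simp add: B_def)
  ultimately have m: "Max B \<in> B" "\<And>t. t \<in> B \<Longrightarrow> t \<le> Max B"
    by (auto intro: Max_in)
  define m where "m = Max B"
  have "2 * card {v\<in>V. m < x v} \<le> card V"
  proof (rule ccontr)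
    assume big: "\<not> ?thesis"
    define U where "U = {v\<in>V. m < x v}"
    have "U \<noteq> {}"
      using big unfolding U_def by (metis card.empty mult_0_right zero_le)
    have "finite U"
      using assms by (simp add: U_def)
    define t where "t = Min (x ` U)"
    have "t \<in> x ` U"
      unfolding t_def using \<open>U \<noteq> {}\<close> \<open>finite U\<close> by (intro Min_in) auto
    then have "m < t" "t \<in> x ` V"
      by (auto simp: U_def)
    have "t \<le> x v" if "v \<in> U" for v
      unfolding t_def using \<open>finite U\<close> that by simp
    then have "{v\<in>V. x v < t} = V - U"
      using \<open>m < t\<close> by (force simp: U_def)
    then have "card {v\<in>V. x v < t} = card V - card U"
      using assms by (simp add: card_Diff_subset U_def)
    then have "t \<in> B"
      using big \<open>t \<in> x ` V\<close> by (simp add: B_def U_def)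
    then show False
      using m(2)[OF \<open>t \<in> B\<close>] \<open>m < t\<close> unfolding m_def by linarith
  qed
  then show ?thesis
    using m(1) by (auto simp: B_def m_def)
qed simp

lemma sum_cut_at_level:
  fixes f :: "'a \<Rightarrow> real"
  assumes "finite V" and "\<And>v. v \<in> V \<Longrightarrow> 0 \<le> f v" and "0 \<le> \<mu>"
    and "\<And>v. v \<in> V \<Longrightarrow> 0 < f v \<Longrightarrow> \<mu> \<le> f v"
  shows "(\<Sum>v\<in>V. f v) = \<mu> * real (card {v\<in>V. 0 < f v}) + (\<Sum>v\<in>V. max (f v - \<mu>) 0)"
proof -
  have "f v = \<mu> * (if 0 < f v then 1 else 0) + max (f v - \<mu>) 0" if "v \<in> V" for v
    using assms(2)[OF that] assms(4)[OF that] assms(3) by (auto simp: max_def)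
  then have "(\<Sum>v\<in>V. f v) = (\<Sum>v\<in>V. \<mu> * (if 0 < f v then 1 else 0) + max (f v - \<mu>) 0)"
    by (rule sum.cong[OF refl])
  also have "\<dots> = \<mu> * (\<Sum>v\<in>V. if 0 < f v then 1 else 0) + (\<Sum>v\<in>V. max (f v - \<mu>) 0)"
    by (simp add: sum.distrib sum_distrib_left)
  also have "(\<Sum>v\<in>V. if 0 < f v then 1 else 0) = real (card {v\<in>V. 0 < f v})"
    using assms(1) by (simp add: sum.If_cases Int_def)
  finally show ?thesis .
qed

lemma rtranclp_crossing_edge:
  "R\<^sup>*\<^sup>* u w \<Longrightarrow> u \<in> S \<Longrightarrow> w \<notin> S \<Longrightarrow> \<exists>a b. a \<in> S \<and> b \<notin> S \<and> R a b"
  by (induction rule: rtranclp_induct) auto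

locale finite_simple_graph =
  fixes V :: "'a set" and E :: "'a \<Rightarrow> 'a \<Rightarrow> bool"
  assumes simple: "simple_graph V E"
begin

lemma finite_vertices: "finite V"
  using simple by (simp add: simple_graph_def)

lemma edge_vertices: "E u v \<Longrightarrow> u \<in> V \<and> v \<in> V"
  using simple by (simp add: simple_graph_def)

lemma edge_sym: "E u v \<Longrightarrow> E v u"
  using simple by (simp add: simple_graph_def)

lemma edge_irrefl: "\<not> E u u"
  using simple by (simp add: simple_graph_def)

lemma boundary_size_eq_sum:
  "real (boundary_size V E S) = (\<Sum>u\<in>V. \<Sum>v\<in>V. if E u v \<and> u \<in> S \<and> v \<notin> S then 1 else 0)"
proof -
  have "{(u, v). u \<in> S \<and> v \<in> V - S \<and> E u v} = {p \<in> V \<times> V. E (fst p) (snd p) \<and> fst p \<in> S \<and> snd p \<notin> S}"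
    using edge_vertices by auto
  then have "real (boundary_size V E S)
      = (\<Sum>p\<in>V \<times> V. if E (fst p) (snd p) \<and> fst p \<in> S \<and> snd p \<notin> S then 1 else 0)"
    using finite_vertices by (simp add: boundary_size_def sum.If_cases Int_def)
  then show ?thesis
    by (simp add: sum.cartesian_product case_prod_beta)
qed

definition edge_descent :: "('a \<Rightarrow> real) \<Rightarrow> real" where
  "edge_descent f = (\<Sum>u\<in>V. \<Sum>v\<in>V. if E u v then max (f u - f v) 0 else 0)"

lemma edge_descent_nonneg: "0 \<le> edge_descent f"
  unfolding edge_descent_def by (intro sum_nonneg) auto

lemma two_edge_descent_eq:
  "2 * edge_descent f = (\<Sum>u\<in>V. \<Sum>v\<in>V. if E u v then \<bar>f u - f v\<bar> else 0)"
proof -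
  have "edge_descent f = (\<Sum>v\<in>V. \<Sum>u\<in>V. if E v u then max (f u - f v) 0 else 0)"
    unfolding edge_descent_def by (subst sum.swap) (auto intro!: sum.cong dest: edge_sym)
  then have "2 * edge_descent f
      = (\<Sum>u\<in>V. \<Sum>v\<in>V. (if E u v then max (f u - f v) 0 else 0) + (if E u v then max (f v - f u) 0 else 0))"
    unfolding edge_descent_def by (simp add: sum.distrib)
  also have "\<dots> = (\<Sum>u\<in>V. \<Sum>v\<in>V. if E u v then \<bar>f u - f v\<bar> else 0)"
    by (intro sum.cong refl) auto
  finally show ?thesis .
qed

lemma edge_descent_cut_at_level:
  assumes nonneg: "\<And>v. v \<in> V \<Longrightarrow> 0 \<le> f v" and "0 < \<mu>"
    and least: "\<And>v. v \<in> V \<Longrightarrow> 0 < f v \<Longrightarrow> \<mu> \<le> f v"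
  shows "edge_descent f = \<mu> * real (boundary_size V E {v\<in>V. 0 < f v}) + edge_descent (\<lambda>v. max (f v - \<mu>) 0)"
proof -
  let ?P = "{v\<in>V. 0 < f v}"
  have "max (f u - f v) 0 = \<mu> * (if u \<in> ?P \<and> v \<notin> ?P then 1 else 0) + max (max (f u - \<mu>) 0 - max (f v - \<mu>) 0) 0"
    if "u \<in> V" "v \<in> V" for u v
    using nonneg[OF that(1)] nonneg[OF that(2)] least[OF that(1)] least[OF that(2)] \<open>0 < \<mu>\<close> that
    by (auto simp: max_def)
  then have "edge_descent f = (\<Sum>u\<in>V. \<Sum>v\<in>V. \<mu> * (if E u v \<and> u \<in> ?P \<and> v \<notin> ?P then 1 else 0)
      + (if E u v then max (max (f u - \<mu>) 0 - max (f v - \<mu>) 0) 0 else 0))"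
    unfolding edge_descent_def by (intro sum.cong refl) auto
  then show ?thesis
    by (simp add: edge_descent_def boundary_size_eq_sum sum.distrib sum_distrib_left)
qed

text \<open>The coarea inequality: summing an isoperimetric bound over the level sets of f.\<close>
lemma edge_descent_ge_level_sets:
  assumes "\<And>v. v \<in> V \<Longrightarrow> 0 \<le> f v"
    and "\<And>S. S \<subseteq> {v\<in>V. 0 < f v} \<Longrightarrow> S \<noteq> {} \<Longrightarrow> c * real (card S) \<le> real (boundary_size V E S)"
  shows "c * (\<Sum>v\<in>V. f v) \<le> edge_descent f"
  using assms
proof (induction "card {v\<in>V. 0 < f v}" arbitrary: f rule: less_induct)
  case less
  let ?P = "{v\<in>V. 0 < f v}"
  show ?case
  proof (cases "?P = {}")
    case True
    then have "(\<Sum>v\<in>V. f v) = 0"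
      using less.prems(1) by (intro sum.neutral) force
    then show ?thesis
      using edge_descent_nonneg by simp
  next
    case False
    have "finite ?P"
      using finite_vertices by simp
    define \<mu> where "\<mu> = Min (f ` ?P)"
    have "\<mu> \<in> f ` ?P"
      unfolding \<mu>_def using \<open>finite ?P\<close> False by (intro Min_in) auto
    then obtain v0 where v0: "v0 \<in> ?P" "f v0 = \<mu>"
      by auto
    have least: "\<mu> \<le> f v" if "v \<in> V" "0 < f v" for v
      unfolding \<mu>_def using \<open>finite ?P\<close> that by simp
    define g where "g = (\<lambda>v. max (f v - \<mu>) 0)"
    have support_g: "{v\<in>V. 0 < g v} \<subseteq> ?P - {v0}"
      using v0 by (auto simp: g_def)
    then have "card {v\<in>V. 0 < g v} < card ?P"
      using \<open>finite ?P\<close> v0(1) by (meson card_Diff1_less finite_Diff card_mono le_less_trans)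
    then have IH: "c * (\<Sum>v\<in>V. g v) \<le> edge_descent g"
    proof (rule less.hyps)
      show "0 \<le> g v" for v
        by (simp add: g_def)
      show "c * real (card S) \<le> real (boundary_size V E S)" if "S \<subseteq> {v\<in>V. 0 < g v}" "S \<noteq> {}" for S
        using less.prems(2) that support_g by blast
    qed
    have "0 < \<mu>"
      using v0 by simp
    have sum_f: "(\<Sum>v\<in>V. f v) = \<mu> * real (card ?P) + (\<Sum>v\<in>V. g v)"
      unfolding g_def using less.prems(1) least \<open>0 < \<mu>\<close> by (intro sum_cut_at_level finite_vertices) auto
    have "\<mu> * (c * real (card ?P)) \<le> \<mu> * real (boundary_size V E ?P)"
      using less.prems(2) False \<open>0 < \<mu>\<close> by (intro mult_left_mono) auto
    then have "c * (\<Sum>v\<in>V. f v) \<le> \<mu> * real (boundary_size V E ?P) + edge_descent g"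
      using IH unfolding sum_f by (simp add: algebra_simps)
    also have "\<dots> = edge_descent f"
      using edge_descent_cut_at_level[of f \<mu>] less.prems(1) least \<open>0 < \<mu>\<close> by (simp add: g_def)
    finally show ?thesis .
  qed
qed

end

locale connected_regular_graph = finite_simple_graph +
  fixes k :: nat
  assumes connected: "connected_graph V E" and regular: "regular V E k"
    and two_le_card: "2 \<le> card V"
begin

lemma card_neighbours: "v \<in> V \<Longrightarrow> card {w\<in>V. E v w} = k"
  using regular by (simp add: regular_def degree_def)

lemma sum_neighbours: "u \<in> V \<Longrightarrow> (\<Sum>v\<in>V. if E u v then c else 0) = c * real k"
  using finite_vertices card_neighbours[of u] by (simp add: sum.If_cases Int_def)

lemma sum_edge_endpoints:
  "(\<Sum>u\<in>V. \<Sum>v\<in>V. if E u v then a u + a v else 0) = 2 * real k * (\<Sum>v\<in>V. a v)"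
proof -
  have "(\<Sum>u\<in>V. \<Sum>v\<in>V. if E u v then a v else 0) = (\<Sum>v\<in>V. \<Sum>u\<in>V. if E v u then a v else 0)"
    by (subst sum.swap) (auto intro!: sum.cong dest: edge_sym)
  moreover have "(\<Sum>u\<in>V. \<Sum>v\<in>V. if E u v then a u + a v else 0)
      = (\<Sum>u\<in>V. \<Sum>v\<in>V. if E u v then a u else 0) + (\<Sum>u\<in>V. \<Sum>v\<in>V. if E u v then a v else 0)"
    unfolding sum.distrib[symmetric] by (intro sum.cong refl) simp
  ultimately have "(\<Sum>u\<in>V. \<Sum>v\<in>V. if E u v then a u + a v else 0)
      = 2 * (\<Sum>u\<in>V. \<Sum>v\<in>V. if E u v then a u else 0)"
    by simp
  also have "\<dots> = 2 * real k * (\<Sum>v\<in>V. a v)"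
    by (simp add: sum_neighbours flip: sum_distrib_right)
  finally show ?thesis .
qed

lemma exists_other_vertex: "\<exists>w\<in>V. w \<noteq> v"
proof (rule ccontr)
  assume "\<not> ?thesis"
  then have "card V \<le> card {v}"
    by (intro card_mono) auto
  then show False
    using two_le_card by simp
qed

lemma vertices_nonempty: "V \<noteq> {}"
  using two_le_card by auto

lemma exists_crossing_edge:
  assumes "u \<in> S" "w \<in> V" "w \<notin> S" "S \<subseteq> V"
  shows "\<exists>a b. a \<in> S \<and> b \<notin> S \<and> E a b"
  using connected assms rtranclp_crossing_edge[of E u w S] by (auto simp: connected_graph_def)

lemma exists_neighbour: "v \<in> V \<Longrightarrow> \<exists>w. E v w"
  using exists_crossing_edge[of v "{v}"] exists_other_vertex by blast

lemma degree_pos: "0 < k"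
proof -
  obtain v w where "v \<in> V" "E v w"
    using vertices_nonempty exists_neighbour by blast
  then have "{w\<in>V. E v w} \<noteq> {}"
    using edge_vertices by blast
  then show ?thesis
    using card_neighbours[OF \<open>v \<in> V\<close>] finite_vertices by (auto simp: card_gt_0_iff)
qed

lemma vol_eq: "S \<subseteq> V \<Longrightarrow> vol V E S = k * card S"
  unfolding vol_def degree_def using card_neighbours by (simp add: subset_iff)

lemma cheeger_le_ratio:
  assumes "S \<subseteq> V" "S \<noteq> {}" "S \<noteq> V"
  shows "cheeger V E \<le> cheeger_ratio V E S"
proof -
  have "finite {S. S \<subseteq> V \<and> S \<noteq> {} \<and> S \<noteq> V}"
    using finite_vertices by simp
  then show ?thesis
    unfolding cheeger_def using assms by (intro Min_le) auto
qed

lemma cheeger_ratio_small_set: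
  assumes "S \<subseteq> V" "2 * card S \<le> card V"
  shows "cheeger_ratio V E S = real (boundary_size V E S) / (real k * real (card S))"
proof -
  have "card (V - S) = card V - card S"
    using assms finite_vertices by (simp add: card_Diff_subset finite_subset)
  moreover have "card S \<le> card V - card S"
    using assms(2) by linarith
  ultimately have "k * card S \<le> vol V E (V - S)"
    using vol_eq[of "V - S"] by simp
  then show ?thesis
    using vol_eq[OF assms(1)] by (simp add: cheeger_ratio_def min_def)
qed

lemma cheeger_pos: "0 < cheeger V E"
proof -
  have "0 < cheeger_ratio V E S" if S: "S \<subseteq> V" "S \<noteq> {}" "S \<noteq> V" for S
  proof -
    obtain u w where "u \<in> S" "w \<in> V" "w \<notin> S"
      using S by blast
    then obtain a b where "a \<in> S" "b \<notin> S" "E a b"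
      using exists_crossing_edge S(1) by blast
    moreover have "finite {(u, v). u \<in> S \<and> v \<in> V - S \<and> E u v}"
      by (rule finite_subset[of _ "V \<times> V"]) (use finite_vertices edge_vertices in auto)
    ultimately have "0 < boundary_size V E S"
      unfolding boundary_size_def using edge_vertices by (auto simp: card_gt_0_iff)
    moreover have "0 < card S" "0 < card (V - S)"
      using S finite_vertices by (auto simp: card_gt_0_iff finite_subset)
    ultimately show ?thesis
      using vol_eq[OF S(1)] vol_eq[of "V - S"] degree_pos by (simp add: cheeger_ratio_def)
  qed
  moreover obtain v where "v \<in> V"
    using vertices_nonempty by blast
  moreover have "{v} \<noteq> V"
    using two_le_card by auto
  ultimately show ?thesis
    unfolding cheeger_def using finite_vertices by (subst Min_gr_iff) auto
qed

lemma cheeger_le_one: "cheeger V E \<le> 1"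
proof -
  obtain v where v: "v \<in> V"
    using vertices_nonempty by blast
  have "{(u, w). u \<in> {v} \<and> w \<in> V - {v} \<and> E u w} = Pair v ` {w\<in>V. E v w}"
    using edge_irrefl by auto
  then have "boundary_size V E {v} = k"
    unfolding boundary_size_def using card_neighbours[OF v] by (simp add: card_image inj_on_def)
  then have "cheeger_ratio V E {v} = 1"
    using cheeger_ratio_small_set[of "{v}"] v two_le_card degree_pos by simp
  moreover have "{v} \<noteq> V"
    using two_le_card by auto
  ultimately show ?thesis
    using cheeger_le_ratio[of "{v}"] v by auto
qed

lemma cheeger_small_set:
  assumes "S \<subseteq> V" "S \<noteq> {}" "2 * card S \<le> card V"
  shows "cheeger V E * real k * real (card S) \<le> real (boundary_size V E S)"
proof -
  have "S \<noteq> V"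
    using assms(3) two_le_card by auto
  have "0 < real k * real (card S)"
    using degree_pos assms finite_vertices by (auto simp: card_gt_0_iff finite_subset)
  moreover have "cheeger V E \<le> real (boundary_size V E S) / (real k * real (card S))"
    using cheeger_le_ratio[OF assms(1,2) \<open>S \<noteq> V\<close>] cheeger_ratio_small_set[OF assms(1,3)] by simp
  ultimately show ?thesis
    by (simp add: field_simps)
qed

lemma gamma_x_ge_edge:
  assumes "E u v"
  shows "\<bar>x u - x v\<bar> \<le> gamma_x V E x"
proof -
  have "{\<bar>x u - x v\<bar> | u v. u \<in> V \<and> v \<in> V \<and> E u v} \<subseteq> (\<lambda>(u, v). \<bar>x u - x v\<bar>) ` (V \<times> V)"
    by force
  then have "finite {\<bar>x u - x v\<bar> | u v. u \<in> V \<and> v \<in> V \<and> E u v}"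
    using finite_vertices finite_subset by blast
  then show ?thesis
    unfolding gamma_x_def using assms edge_vertices by (intro Max_ge) blast+
qed

lemma gamma_x_nonneg: "0 \<le> gamma_x V E x"
proof -
  obtain v w where "v \<in> V" "E v w"
    using vertices_nonempty exists_neighbour by blast
  then show ?thesis
    using gamma_x_ge_edge[of v w x] by linarith
qed

lemma cheeger_upper_part:
  assumes edges: "\<And>u v. E u v \<Longrightarrow> \<bar>x u - x v\<bar> \<le> g"
    and small: "2 * card {v\<in>V. m < x v} \<le> card V"
  shows "cheeger V E * (\<Sum>v\<in>V. (max (x v - m) 0)\<^sup>2) \<le> g * (\<Sum>v\<in>V. max (x v - m) 0)"
proof -
  define y where "y v = max (x v - m) 0" for v
  have "cheeger V E * real k * (\<Sum>v\<in>V. (y v)\<^sup>2) \<le> edge_descent (\<lambda>v. (y v)\<^sup>2)"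
  proof (rule edge_descent_ge_level_sets)
    fix S assume S: "S \<subseteq> {v\<in>V. 0 < (y v)\<^sup>2}" "S \<noteq> {}"
    then have "S \<subseteq> {v\<in>V. m < x v}"
      by (auto simp: y_def max_def split: if_splits)
    then have "card S \<le> card {v\<in>V. m < x v}"
      using finite_vertices by (intro card_mono) auto
    then show "cheeger V E * real k * real (card S) \<le> real (boundary_size V E S)"
      using cheeger_small_set[of S] S small by auto
  qed simp
  also have "2 * edge_descent (\<lambda>v. (y v)\<^sup>2) = (\<Sum>u\<in>V. \<Sum>v\<in>V. if E u v then \<bar>(y u)\<^sup>2 - (y v)\<^sup>2\<bar> else 0)"
    by (rule two_edge_descent_eq)
  also have "\<dots> \<le> (\<Sum>u\<in>V. \<Sum>v\<in>V. if E u v then g * y u + g * y v else 0)"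
  proof (intro sum_mono)
    fix u v
    have "\<bar>y u - y v\<bar> \<le> g" if "E u v"
      using edges[OF that] by (simp add: y_def max_def abs_le_iff)
    then show "(if E u v then \<bar>(y u)\<^sup>2 - (y v)\<^sup>2\<bar> else 0) \<le> (if E u v then g * y u + g * y v else 0)"
      using abs_diff_power2_le[of "y u" "y v" g] by (simp add: y_def distrib_left)
  qed
  also have "\<dots> = 2 * real k * (g * (\<Sum>v\<in>V. y v))"
    by (simp add: sum_edge_endpoints sum_distrib_left)
  finally have "real k * (cheeger V E * (\<Sum>v\<in>V. (y v)\<^sup>2)) \<le> real k * (g * (\<Sum>v\<in>V. y v))"
    by (simp add: mult_ac)
  then show ?thesis
    using degree_pos by (simp add: y_def)
qed

lemma cheeger_sq_sum_sq_le:
  assumes edges: "\<And>u v. E u v \<Longrightarrow> \<bar>x u - x v\<bar> \<le> g"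
    and sum_zero: "(\<Sum>v\<in>V. x v) = 0"
  shows "(cheeger V E)\<^sup>2 * (\<Sum>v\<in>V. (x v)\<^sup>2) \<le> real (card V) * g\<^sup>2"
proof -
  let ?h = "cheeger V E"
  obtain m where median: "2 * card {v\<in>V. m < x v} \<le> card V" "2 * card {v\<in>V. x v < m} \<le> card V"
    using exists_median finite_vertices by blast
  define q where "q = (\<Sum>v\<in>V. (x v - m)\<^sup>2)"
  define s where "s = (\<Sum>v\<in>V. \<bar>x v - m\<bar>)"
  have "?h * (\<Sum>v\<in>V. (max (x v - m) 0)\<^sup>2) \<le> g * (\<Sum>v\<in>V. max (x v - m) 0)"
    using edges median(1) by (rule cheeger_upper_part)
  moreover have "?h * (\<Sum>v\<in>V. (max (m - x v) 0)\<^sup>2) \<le> g * (\<Sum>v\<in>V. max (m - x v) 0)"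
    using cheeger_upper_part[of "\<lambda>v. - x v" g "- m"] edges median(2) by (simp add: abs_minus_commute)
  moreover have "(x v - m)\<^sup>2 = (max (x v - m) 0)\<^sup>2 + (max (m - x v) 0)\<^sup>2"
    "\<bar>x v - m\<bar> = max (x v - m) 0 + max (m - x v) 0" for v
    by (auto simp: max_def power2_eq_square algebra_simps)
  ultimately have hq: "?h * q \<le> g * s"
    unfolding q_def s_def by (simp add: sum.distrib algebra_simps)
  have cauchy_schwarz: "s\<^sup>2 \<le> q * real (card V)"
    unfolding s_def q_def using sum_squared_le_sum_of_squares[of "\<lambda>v. \<bar>x v - m\<bar>" V] by simp
  have "?h\<^sup>2 * q \<le> real (card V) * g\<^sup>2"
  proof (cases "q = 0")
    case False
    then have "0 < q"
      unfolding q_def by (metis sum_nonneg zero_le_power2 order_le_less)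
    have "q * (?h\<^sup>2 * q) = (?h * q)\<^sup>2"
      by (simp add: power2_eq_square)
    also have "\<dots> \<le> (g * s)\<^sup>2"
      using hq cheeger_pos \<open>0 < q\<close> by (intro power_mono) auto
    also have "\<dots> \<le> g\<^sup>2 * (q * real (card V))"
      using cauchy_schwarz by (simp add: power_mult_distrib mult_left_mono)
    finally show ?thesis
      using \<open>0 < q\<close> by (simp add: mult_ac)
  qed simp
  moreover have "(\<Sum>v\<in>V. (x v)\<^sup>2) \<le> q"
    unfolding q_def using sum_power2_diff_const[of x m V] sum_zero by simp
  ultimately show ?thesis
    by (meson mult_left_mono zero_le_power2 order_trans)
qed

lemma feasible_nonempty: "feasible V \<noteq> {}"
proof -
  obtain v w where vw: "v \<in> V" "w \<in> V" "w \<noteq> v"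
    using vertices_nonempty exists_other_vertex by blast
  define x where "x u = (if u = v then 1 else 0) - (if u = w then 1 else 0 :: real)" for u
  have "(\<Sum>u\<in>V. x u) = 0"
    using finite_vertices vw by (simp add: x_def sum_subtractf)
  moreover have "Max ((\<lambda>u. \<bar>x u\<bar>) ` V) = 1"
    using finite_vertices vw by (intro Max_eqI) (auto simp: x_def)
  ultimately have "x \<in> feasible V"
    using vw by (auto simp: feasible_def x_def)
  then show ?thesis
    by blast
qed

text \<open>Here |x v0| = 1 and the other coordinates have mean \<mu> = - x v0 / (n - 1). A neighbour u of
  v0 satisfies |x u - \<mu>| \<ge> n / (n - 1) - gamma_x V E x \<ge> 1/2, which adds 1/4 to the bound
  n / (n - 1) on the sum of squares.\<close>
lemma feasible_sum_sq_gap: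
  assumes feasible: "x \<in> feasible V" and small: "gamma_x V E x \<le> 1/2 + 1 / (real (card V) - 1)"
  shows "real (card V) / (real (card V) - 1) + 1/4 \<le> (\<Sum>v\<in>V. (x v)\<^sup>2)"
proof -
  define n where "n = real (card V)"
  have "2 \<le> n"
    using two_le_card by (simp add: n_def)
  have "Max ((\<lambda>v. \<bar>x v\<bar>) ` V) \<in> (\<lambda>v. \<bar>x v\<bar>) ` V"
    using finite_vertices vertices_nonempty by (intro Max_in) auto
  then obtain v0 where v0: "v0 \<in> V" "\<bar>x v0\<bar> = 1"
    using feasible by (auto simp: feasible_def)
  obtain u where "E v0 u"
    using exists_neighbour[OF v0(1)] by blast
  define W where "W = V - {v0}"
  define a where "a = x v0"
  define \<mu> where "\<mu> = - a / (n - 1)"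
  have "u \<in> W"
    using \<open>E v0 u\<close> edge_vertices edge_irrefl by (auto simp: W_def)
  have "a\<^sup>2 = 1"
    using v0(2) by (metis a_def power2_abs power_one)
  have "finite W" "real (card W) = n - 1"
    using finite_vertices v0(1) two_le_card by (simp_all add: W_def n_def of_nat_diff)
  have "(\<Sum>v\<in>W. x v) = - a"
    using feasible sum.remove[OF finite_vertices v0(1), of x] by (simp add: W_def a_def feasible_def)
  then have "(\<Sum>v\<in>W. (x v)\<^sup>2) = 1 / (n - 1) + (\<Sum>v\<in>W. (x v - \<mu>)\<^sup>2)"
    using sum_power2_eq_mean_deviation[of x W] \<open>real (card W) = n - 1\<close> \<open>a\<^sup>2 = 1\<close> by (simp add: \<mu>_def)
  moreover have "(\<Sum>v\<in>V. (x v)\<^sup>2) = 1 + (\<Sum>v\<in>W. (x v)\<^sup>2)"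
    using sum.remove[OF finite_vertices v0(1), of "\<lambda>v. (x v)\<^sup>2"] \<open>a\<^sup>2 = 1\<close> by (simp add: W_def a_def)
  ultimately have sum_sq: "(\<Sum>v\<in>V. (x v)\<^sup>2) = 1 + 1 / (n - 1) + (\<Sum>v\<in>W. (x v - \<mu>)\<^sup>2)"
    by simp
  have "\<bar>a - \<mu>\<bar> = n / (n - 1)"
    using \<open>2 \<le> n\<close> v0(2) by (simp add: \<mu>_def a_def field_simps abs_mult)
  moreover have "\<bar>a - x u\<bar> \<le> 1/2 + 1 / (n - 1)"
    using gamma_x_ge_edge[OF \<open>E v0 u\<close>, of x] small by (simp add: a_def n_def)
  moreover have "n / (n - 1) = 1 + 1 / (n - 1)"
    using \<open>2 \<le> n\<close> by (simp add: field_simps)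
  moreover have "\<bar>a - \<mu>\<bar> \<le> \<bar>a - x u\<bar> + \<bar>x u - \<mu>\<bar>"
    using abs_triangle_ineq[of "a - x u" "x u - \<mu>"] by simp
  ultimately have "1/2 \<le> \<bar>x u - \<mu>\<bar>"
    by linarith
  then have "(1/2)\<^sup>2 \<le> \<bar>x u - \<mu>\<bar>\<^sup>2"
    by (intro power_mono) auto
  then have "1/4 \<le> (x u - \<mu>)\<^sup>2"
    by (simp add: power2_abs power_divide)
  also have "\<dots> \<le> (\<Sum>v\<in>W. (x v - \<mu>)\<^sup>2)"
    using \<open>finite W\<close> \<open>u \<in> W\<close> by (intro member_le_sum) auto
  finally show ?thesis
    using sum_sq \<open>n / (n - 1) = 1 + 1 / (n - 1)\<close> by (simp add: n_def)
qed

lemma feasible_small_gamma_x_bound: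
  assumes feasible: "x \<in> feasible V" and small: "gamma_x V E x \<le> 1/2 + 1 / (real (card V) - 1)"
  shows "(cheeger V E)\<^sup>2 * (1 + (real (card V) - 1) / (4 * real (card V)))
    \<le> (real (card V) - 1) * (gamma_x V E x)\<^sup>2"
proof -
  define n where "n = real (card V)"
  have "2 \<le> n"
    using two_le_card by (simp add: n_def)
  have "(cheeger V E)\<^sup>2 * (n / (n - 1) + 1/4) \<le> (cheeger V E)\<^sup>2 * (\<Sum>v\<in>V. (x v)\<^sup>2)"
    using feasible_sum_sq_gap[OF assms] by (intro mult_left_mono) (simp_all add: n_def)
  also have "\<dots> \<le> n * (gamma_x V E x)\<^sup>2"
    using feasible unfolding n_def feasible_def
    by (intro cheeger_sq_sum_sq_le gamma_x_ge_edge) blast+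
  finally have "(n - 1) / n * ((cheeger V E)\<^sup>2 * (n / (n - 1) + 1/4)) \<le> (n - 1) / n * (n * (gamma_x V E x)\<^sup>2)"
    using \<open>2 \<le> n\<close> by (intro mult_left_mono) auto
  moreover have "(n - 1) / n * ((cheeger V E)\<^sup>2 * (n / (n - 1) + 1/4)) = (cheeger V E)\<^sup>2 * (1 + (n - 1) / (4 * n))"
    using \<open>2 \<le> n\<close> by (simp add: field_simps)
  ultimately show ?thesis
    using \<open>2 \<le> n\<close> by (simp add: n_def)
qed

text \<open>The gap must be uniform in x because gamma V E is an infimum.\<close>
lemma feasible_gamma_x_gap:
  "\<exists>c > (cheeger V E)\<^sup>2. \<forall>x\<in>feasible V. c \<le> (real (card V) - 1) * (gamma_x V E x)\<^sup>2"
proof -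
  define n where "n = real (card V)"
  define h where "h = cheeger V E"
  define T where "T = 1/2 + 1 / (n - 1)"
  define c where "c = min ((n - 1) * T\<^sup>2) (h\<^sup>2 * (1 + (n - 1) / (4 * n)))"
  have "2 \<le> n"
    using two_le_card by (simp add: n_def)
  have "0 < h" "h \<le> 1"
    using cheeger_pos cheeger_le_one by (simp_all add: h_def)
  have "(n - 1) * T\<^sup>2 = (n - 1) / 4 + 1 + 1 / (n - 1)"
    using \<open>2 \<le> n\<close> unfolding T_def by (simp add: power2_eq_square divide_simps) algebra
  moreover have "0 < (n - 1) / 4" "0 < 1 / (n - 1)"
    using \<open>2 \<le> n\<close> by simp_all
  ultimately have "h\<^sup>2 < (n - 1) * T\<^sup>2"
    using \<open>0 < h\<close> \<open>h \<le> 1\<close> power_le_one[of h 2] by linarith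
  moreover have "h\<^sup>2 < h\<^sup>2 * (1 + (n - 1) / (4 * n))"
    using \<open>2 \<le> n\<close> \<open>0 < h\<close> by simp
  ultimately have "h\<^sup>2 < c"
    by (simp add: c_def)
  moreover have "c \<le> (n - 1) * (gamma_x V E x)\<^sup>2" if "x \<in> feasible V" for x
  proof (cases "T < gamma_x V E x")
    case True
    then have "T\<^sup>2 \<le> (gamma_x V E x)\<^sup>2"
      using \<open>2 \<le> n\<close> by (intro power_mono) (auto simp: T_def)
    then show ?thesis
      using \<open>2 \<le> n\<close> by (simp add: c_def min.coboundedI1)
  next
    case False
    then show ?thesis
      using feasible_small_gamma_x_bound[OF that] by (simp add: c_def h_def n_def T_def min.coboundedI2)
  qed
  ultimately show ?thesis
    unfolding h_def n_def by blast
qed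

lemma sqrt_le_gamma:
  assumes "\<And>x. x \<in> feasible V \<Longrightarrow> c \<le> (real (card V) - 1) * (gamma_x V E x)\<^sup>2"
  shows "sqrt c \<le> sqrt (real (card V) - 1) * gamma V E"
proof -
  have pos: "0 < sqrt (real (card V) - 1)"
    using two_le_card by simp
  have "sqrt c / sqrt (real (card V) - 1) \<le> gamma V E"
    unfolding gamma_def
  proof (rule cInf_greatest)
    show "gamma_x V E ` feasible V \<noteq> {}"
      using feasible_nonempty by simp
    fix g assume "g \<in> gamma_x V E ` feasible V"
    then obtain x where x: "x \<in> feasible V" "g = gamma_x V E x"
      by blast
    have "sqrt c \<le> sqrt ((real (card V) - 1) * g\<^sup>2)"
      using assms[OF x(1)] x(2) by simp
    also have "\<dots> = sqrt (real (card V) - 1) * g"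
      using gamma_x_nonneg x(2) by (simp add: real_sqrt_mult)
    finally show "sqrt c / sqrt (real (card V) - 1) \<le> g"
      using pos by (simp add: divide_le_eq mult.commute)
  qed
  then show ?thesis
    using pos by (simp add: divide_le_eq mult.commute)
qed

end

theorem theorem4p6:
  fixes V :: "'a set" and E :: "'a \<Rightarrow> 'a \<Rightarrow> bool" and k :: nat
  assumes "simple_graph V E" and "connected_graph V E" and "regular V E k"
    and "card V \<ge> 2"
  shows "cheeger V E < sqrt (real (card V) - 1) * gamma V E"
proof -
  interpret connected_regular_graph V E k
    using assms by unfold_locales
  obtain c where c: "(cheeger V E)\<^sup>2 < c"
    and bound: "\<forall>x\<in>feasible V. c \<le> (real (card V) - 1) * (gamma_x V E x)\<^sup>2"
    using feasible_gamma_x_gap by blast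
  have "cheeger V E < sqrt c"
    using real_sqrt_less_mono[OF c] cheeger_pos by simp
  also have "\<dots> \<le> sqrt (real (card V) - 1) * gamma V E"
    using bound by (intro sqrt_le_gamma) blast
  finally show ?thesis .
qed

end
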